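(* Let $k\ge 1$ and let $\Delta^+=\{(\vec x,\vec y)\in\mathbb R^k\times\mathbb R^k:\ x_i<y_i \text{ for all } i=1,\dots,k\}$. Call a pair $(\vec l,\vec b)\in\mathbb R^k\times\mathbb R^k$ admissible if $\vec l=(l_1,\dots,l_k)$ is a unit vector (Euclidean norm $1$) with $l_i>0$ for every $i$, and $\vec b=(b_1,\dots,b_k)$ satisfies $\sum_{i=1}^k b_i=0$. For an admissible pair let $\pi_{(\vec l,\vec b)}=\{(s\vec l+\vec b,\ t\vec l+\vec b): s,t\in\mathbb R,\ s<t\}\subseteq\mathbb R^k\times\mathbb R^k$. Then for every $(\vec x,\vec y)\in\Delta^+$ there exists one and only one admissible pair $(\vec l,\vec b)$ such that $(\vec x,\vec y)\in\pi_{(\vec l,\vec b)}$. *)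

theory Defs
  imports "HOL-Analysis.Analysis"
begin

text \<open>Vectors in R^k are modelled as real ^ 'k for a finite index type 'k (k = CARD('k) \<ge> 1).\<close>

definition Delta_plus :: "((real ^ 'k) \<times> (real ^ 'k)) set" where
  "Delta_plus = {p. \<forall>i. fst p $ i < snd p $ i}"

definition admissible :: "real ^ 'k \<Rightarrow> real ^ 'k \<Rightarrow> bool" where
  "admissible l b \<longleftrightarrow> norm l = 1 \<and> (\<forall>i. l $ i > 0) \<and> (\<Sum>i\<in>UNIV. b $ i) = 0"

definition pi_lb :: "real ^ 'k \<Rightarrow> real ^ 'k \<Rightarrow> ((real ^ 'k) \<times> (real ^ 'k)) set" where
  "pi_lb l b = {(s *\<^sub>R l + b, t *\<^sub>R l + b) | s t. s < t}"

end

theory Submission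
  imports Defs
begin

text \<open>For (l, b) admissible and (x, y) \<in> \<pi>(l, b), the difference y - x is a positive multiple of
  the unit vector l, so l = sgn (y - x) is forced.  Summing the coordinates of x = s l + b kills b,
  so s = (\<Sigma> x) / (\<Sigma> l) (note \<Sigma> l > 0) and b = x - s l is forced as well.  Conversely, for
  x < y coordinatewise these two formulas do define an admissible pair whose line passes
  through x and then y.\<close>

lemma scaleR_norm_sgn: "norm x *\<^sub>R sgn x = (x :: 'a :: real_normed_vector)"
  by (cases "x = 0") (simp_all add: sgn_div_norm)

lemma sgn_scaleR_unit:
  fixes u :: "'a :: real_normed_vector"
  assumes "0 < r" and "norm u = 1"
  shows "sgn (r *\<^sub>R u) = u"
  using assms by (simp add: sgn_scaleR sgn_div_norm)

lemma sum_vec_pos: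
  fixes v :: "real ^ 'k"
  assumes "\<And>i. 0 < v $ i"
  shows "0 < (\<Sum>i\<in>UNIV. v $ i)"
  using assms by (intro sum_pos) auto

lemma sum_vec_scaleR_add:
  fixes l b :: "real ^ 'k"
  shows "(\<Sum>i\<in>UNIV. (s *\<^sub>R l + b) $ i) = s * (\<Sum>i\<in>UNIV. l $ i) + (\<Sum>i\<in>UNIV. b $ i)"
  by (simp add: sum.distrib sum_distrib_left)

definition base_point :: "real ^ 'k \<Rightarrow> real ^ 'k \<Rightarrow> real ^ 'k" where
  "base_point l x = x - ((\<Sum>i\<in>UNIV. x $ i) / (\<Sum>i\<in>UNIV. l $ i)) *\<^sub>R l"

lemma sum_base_point:
  fixes l x :: "real ^ 'k"
  assumes "(\<Sum>i\<in>UNIV. l $ i) \<noteq> 0"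
  shows "(\<Sum>i\<in>UNIV. base_point l x $ i) = 0"
  using assms by (simp add: base_point_def sum_subtractf sum_divide_distrib[symmetric]
      sum_distrib_left[symmetric])

lemma admissible_pi_lb_unique:
  fixes l b x y :: "real ^ 'k"
  assumes adm: "admissible l b" and mem: "(x, y) \<in> pi_lb l b"
  shows "l = sgn (y - x)" and "b = base_point l x"
proof -
  obtain s t where "s < t" and x: "x = s *\<^sub>R l + b" and y: "y = t *\<^sub>R l + b"
    using mem by (auto simp: pi_lb_def)
  have l_unit: "norm l = 1" and l_pos: "\<And>i. 0 < l $ i" and b_sum: "(\<Sum>i\<in>UNIV. b $ i) = 0"
    using adm by (auto simp: admissible_def)
  have "y - x = (t - s) *\<^sub>R l"
    by (simp add: x y algebra_simps)
  then show "l = sgn (y - x)"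
    using sgn_scaleR_unit[OF _ l_unit, of "t - s"] \<open>s < t\<close> by simp
  have "(\<Sum>i\<in>UNIV. x $ i) = s * (\<Sum>i\<in>UNIV. l $ i)"
    unfolding x sum_vec_scaleR_add b_sum by simp
  then have "s = (\<Sum>i\<in>UNIV. x $ i) / (\<Sum>i\<in>UNIV. l $ i)"
    using sum_vec_pos[OF l_pos] by simp
  then show "b = base_point l x"
    by (simp add: base_point_def x)
qed

lemma admissible_pi_lb_exists:
  fixes x y :: "real ^ 'k"
  assumes "(x, y) \<in> Delta_plus"
  defines "l \<equiv> sgn (y - x)"
  shows "admissible l (base_point l x)" and "(x, y) \<in> pi_lb l (base_point l x)"
proof -
  have d_pos: "\<And>i. 0 < (y - x) $ i"
    using assms(1) by (simp add: Delta_plus_def)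
  then have "y - x \<noteq> 0"
    by (metis less_irrefl zero_index)
  then have "norm l = 1" and "0 < norm (y - x)"
    by (simp_all add: l_def norm_sgn)
  moreover have l_pos: "\<And>i. 0 < l $ i"
    using d_pos \<open>0 < norm (y - x)\<close> by (simp add: l_def sgn_div_norm)
  ultimately show "admissible l (base_point l x)"
    using sum_base_point[of l x] sum_vec_pos[OF l_pos] by (simp add: admissible_def)
  define s where "s = (\<Sum>i\<in>UNIV. x $ i) / (\<Sum>i\<in>UNIV. l $ i)"
  have "x = s *\<^sub>R l + base_point l x"
    by (simp add: base_point_def s_def)
  moreover have "y = (s + norm (y - x)) *\<^sub>R l + base_point l x"
    using scaleR_norm_sgn[of "y - x"] by (simp add: base_point_def s_def l_def algebra_simps)
  ultimately show "(x, y) \<in> pi_lb l (base_point l x)"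
    unfolding pi_lb_def using \<open>0 < norm (y - x)\<close> by force
qed

theorem proposition2p2:
  fixes x y :: "real ^ 'k"
  assumes "(x, y) \<in> Delta_plus"
  shows "\<exists>!lb. admissible (fst lb) (snd lb) \<and> (x, y) \<in> pi_lb (fst lb) (snd lb)"
proof (rule ex1I)
  let ?l = "sgn (y - x)"
  show "admissible (fst (?l, base_point ?l x)) (snd (?l, base_point ?l x))
      \<and> (x, y) \<in> pi_lb (fst (?l, base_point ?l x)) (snd (?l, base_point ?l x))"
    using admissible_pi_lb_exists[OF assms] by simp
next
  fix lb :: "(real ^ 'k) \<times> (real ^ 'k)"
  assume "admissible (fst lb) (snd lb) \<and> (x, y) \<in> pi_lb (fst lb) (snd lb)"
  then show "lb = (sgn (y - x), base_point (sgn (y - x)) x)"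
    using admissible_pi_lb_unique by (metis prod.collapse)
qed

end
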